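(* Let $R$ be a subring of a ring $S$, and assume that every semiprime factor ring of $R$ and of $S$ is left or right Goldie and that the prime radical of every factor ring of $R$ and of $S$ is nilpotent. Then $\lambda$ is a left adjoint to $\rho$ if and only if for all $P\in\operatorname{Spec} S$ and $Q\in\operatorname{Spec} R$, $Q^S\subseteq P$ implies $Q\subseteq\sqrt{P\cap R}$.
   Context: $\operatorname{Spec}$ carries the Zariski topology, closed sets $V_A(X)=\{P\in\operatorname{Spec} A:P\supseteq X\}$; for $U\subseteq\operatorname{Spec} A$, $I(U)$ is the intersection of the primes in $U$; $\sqrt{K}$ is the prime radical of an ideal $K$. For an ideal $I$ of $R$, $I^S=\operatorname{ann}_S(S/SI)$. The functor $\lambda$ sends a closed $V\subseteq\operatorname{Spec} S$ to $V_R(I(V)\cap R)$; the functor $\rho$ sends a closed $V\subseteq\operatorname{Spec} R$ to $V_S(I(V)^S)$. "$\lambda$ is a left adjoint to $\rho$" means $\lambda U\subseteq V\iff U\subseteq\rho V$ for all closed $U\subseteq\operatorname{Spec} S$, $V\subseteq\operatorname{Spec} R$. *)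

theory Defs
  imports "HOL-Algebra.Algebra"
begin

definition nc_prime :: "('a, 'b) ring_scheme \<Rightarrow> 'a set \<Rightarrow> bool" where
  "nc_prime A P \<longleftrightarrow> ideal P A \<and> P \<noteq> carrier A \<and>
     (\<forall>I J. ideal I A \<longrightarrow> ideal J A \<longrightarrow>
        (\<forall>a\<in>I. \<forall>b\<in>J. a \<otimes>\<^bsub>A\<^esub> b \<in> P) \<longrightarrow> I \<subseteq> P \<or> J \<subseteq> P)"

definition Spec :: "('a, 'b) ring_scheme \<Rightarrow> 'a set set" where
  "Spec A = {P. nc_prime A P}"

definition Vz :: "('a, 'b) ring_scheme \<Rightarrow> 'a set \<Rightarrow> 'a set set" where
  "Vz A Y = {P. P \<in> Spec A \<and> Y \<subseteq> P}"

definition zariski_closed :: "('a, 'b) ring_scheme \<Rightarrow> 'a set set \<Rightarrow> bool" where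
  "zariski_closed A V \<longleftrightarrow> (\<exists>Y. Y \<subseteq> carrier A \<and> V = Vz A Y)"

definition Iz :: "('a, 'b) ring_scheme \<Rightarrow> 'a set set \<Rightarrow> 'a set" where
  "Iz A U = carrier A \<inter> \<Inter> U"

definition prad :: "('a, 'b) ring_scheme \<Rightarrow> 'a set \<Rightarrow> 'a set" where
  "prad A K = Iz A (Vz A K)"

definition prime_radical :: "('a, 'b) ring_scheme \<Rightarrow> 'a set" where
  "prime_radical A = prad A {\<zero>\<^bsub>A\<^esub>}"

definition semiprime_ring :: "('a, 'b) ring_scheme \<Rightarrow> bool" where
  "semiprime_ring A \<longleftrightarrow> (\<forall>I. ideal I A \<longrightarrow>
      (\<forall>a\<in>I. \<forall>b\<in>I. a \<otimes>\<^bsub>A\<^esub> b = \<zero>\<^bsub>A\<^esub>) \<longrightarrow> I = {\<zero>\<^bsub>A\<^esub>})"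

definition nilpotent_set :: "('a, 'b) ring_scheme \<Rightarrow> 'a set \<Rightarrow> bool" where
  "nilpotent_set A N \<longleftrightarrow> (\<exists>n::nat. \<forall>xs. length xs = n \<longrightarrow> set xs \<subseteq> N \<longrightarrow>
      foldr (\<lambda>x y. x \<otimes>\<^bsub>A\<^esub> y) xs \<one>\<^bsub>A\<^esub> = \<zero>\<^bsub>A\<^esub>)"

definition left_ideal :: "('a, 'b) ring_scheme \<Rightarrow> 'a set \<Rightarrow> bool" where
  "left_ideal A L \<longleftrightarrow> additive_subgroup L A \<and>
     (\<forall>r\<in>carrier A. \<forall>x\<in>L. r \<otimes>\<^bsub>A\<^esub> x \<in> L)"

definition right_ideal :: "('a, 'b) ring_scheme \<Rightarrow> 'a set \<Rightarrow> bool" where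
  "right_ideal A L \<longleftrightarrow> additive_subgroup L A \<and>
     (\<forall>r\<in>carrier A. \<forall>x\<in>L. x \<otimes>\<^bsub>A\<^esub> r \<in> L)"

definition lann :: "('a, 'b) ring_scheme \<Rightarrow> 'a set \<Rightarrow> 'a set" where
  "lann A Y = {a \<in> carrier A. \<forall>x\<in>Y. a \<otimes>\<^bsub>A\<^esub> x = \<zero>\<^bsub>A\<^esub>}"

definition rann :: "('a, 'b) ring_scheme \<Rightarrow> 'a set \<Rightarrow> 'a set" where
  "rann A Y = {a \<in> carrier A. \<forall>x\<in>Y. x \<otimes>\<^bsub>A\<^esub> a = \<zero>\<^bsub>A\<^esub>}"

definition independent_seq :: "('a, 'b) ring_scheme \<Rightarrow> (nat \<Rightarrow> 'a set) \<Rightarrow> bool" where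
  "independent_seq A L \<longleftrightarrow> (\<forall>n x. (\<forall>i\<le>n. x i \<in> L i) \<longrightarrow>
      finsum A x {..n} = \<zero>\<^bsub>A\<^esub> \<longrightarrow> (\<forall>i\<le>n. x i = \<zero>\<^bsub>A\<^esub>))"

text \<open>Left Goldie: ACC on left annihilators and finite left uniform dimension
(no infinite direct sum of nonzero left ideals); right Goldie symmetric.\<close>
definition left_goldie :: "('a, 'b) ring_scheme \<Rightarrow> bool" where
  "left_goldie A \<longleftrightarrow>
     \<not> (\<exists>Y::nat \<Rightarrow> 'a set. (\<forall>n. Y n \<subseteq> carrier A \<and> lann A (Y n) \<subset> lann A (Y (Suc n)))) \<and>
     \<not> (\<exists>L::nat \<Rightarrow> 'a set. (\<forall>n. left_ideal A (L n) \<and> L n \<noteq> {\<zero>\<^bsub>A\<^esub>}) \<and> independent_seq A L)"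

definition right_goldie :: "('a, 'b) ring_scheme \<Rightarrow> bool" where
  "right_goldie A \<longleftrightarrow>
     \<not> (\<exists>Y::nat \<Rightarrow> 'a set. (\<forall>n. Y n \<subseteq> carrier A \<and> rann A (Y n) \<subset> rann A (Y (Suc n)))) \<and>
     \<not> (\<exists>L::nat \<Rightarrow> 'a set. (\<forall>n. right_ideal A (L n) \<and> L n \<noteq> {\<zero>\<^bsub>A\<^esub>}) \<and> independent_seq A L)"

definition goldie_hyp :: "('a, 'b) ring_scheme \<Rightarrow> bool" where
  "goldie_hyp A \<longleftrightarrow> (\<forall>I. ideal I A \<longrightarrow>
      (semiprime_ring (A Quot I) \<longrightarrow> left_goldie (A Quot I) \<or> right_goldie (A Quot I)) \<and>
      nilpotent_set (A Quot I) (prime_radical (A Quot I)))"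

definition left_gen :: "('a, 'b) ring_scheme \<Rightarrow> 'a set \<Rightarrow> 'a set" where
  "left_gen S I = {finsum S (\<lambda>k. s k \<otimes>\<^bsub>S\<^esub> x k) {..<(n::nat)} | n s x.
      s \<in> {..<n} \<rightarrow> carrier S \<and> x \<in> {..<n} \<rightarrow> I}"

text \<open>I^S = ann_S(S/SI).\<close>
definition extS :: "('a, 'b) ring_scheme \<Rightarrow> 'a set \<Rightarrow> 'a set" where
  "extS S I = {s \<in> carrier S. \<forall>t\<in>carrier S. s \<otimes>\<^bsub>S\<^esub> t \<in> left_gen S I}"

definition lam :: "('a, 'b) ring_scheme \<Rightarrow> 'a set \<Rightarrow> 'a set set \<Rightarrow> 'a set set" where
  "lam S R U = Vz (S\<lparr>carrier := R\<rparr>) (Iz S U \<inter> R)"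

definition rho :: "('a, 'b) ring_scheme \<Rightarrow> 'a set \<Rightarrow> 'a set set \<Rightarrow> 'a set set" where
  "rho S R V = Vz S (extS S (Iz (S\<lparr>carrier := R\<rparr>) V))"

end

theory Submission
  imports Defs
begin

text \<open>The forward implication is formal: feed the closed sets \<open>V(P)\<close> and \<open>V(Q)\<close>, whose
  ideals are \<open>P\<close> and \<open>Q\<close>, to the adjunction.
  For the other half the Goldie property enters through Goldie's theorem: a semiprime ideal
  is a finite intersection of primes. Write \<open>I(V) = Q\<^sub>1 \<inter> \<dots> \<inter> Q\<^sub>m\<close> and
  \<open>\<surd>(I(V)\<^sup>S) = P\<^sub>1 \<inter> \<dots> \<inter> P\<^sub>k\<close>. If \<open>U \<subseteq> \<rho>V\<close>, a prime \<open>Q' \<supseteq> I(U) \<inter> R\<close> of \<open>R\<close>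
  contains some \<open>P\<^sub>i \<inter> R\<close>, primeness of \<open>P\<^sub>i\<close> gives \<open>Q\<^sub>j\<^sup>S \<subseteq> P\<^sub>i\<close> for some \<open>j\<close>, and
  the hypothesis yields \<open>I(V) \<subseteq> Q\<^sub>j \<subseteq> \<surd>(P\<^sub>i \<inter> R) \<subseteq> Q'\<close>, so \<open>Q' \<in> V\<close>.\<close>

definition lann_mod :: "('a, 'b) ring_scheme \<Rightarrow> 'a set \<Rightarrow> 'a set \<Rightarrow> 'a set" where
  "lann_mod A N Y = {a \<in> carrier A. \<forall>y\<in>Y. a \<otimes>\<^bsub>A\<^esub> y \<in> N}"

definition rann_mod :: "('a, 'b) ring_scheme \<Rightarrow> 'a set \<Rightarrow> 'a set \<Rightarrow> 'a set" where
  "rann_mod A N Y = {a \<in> carrier A. \<forall>y\<in>Y. y \<otimes>\<^bsub>A\<^esub> a \<in> N}"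

definition semiprime_ideal :: "('a, 'b) ring_scheme \<Rightarrow> 'a set \<Rightarrow> bool" where
  "semiprime_ideal A N \<longleftrightarrow> ideal N A \<and>
     (\<forall>K. ideal K A \<longrightarrow> (\<forall>a\<in>K. \<forall>b\<in>K. a \<otimes>\<^bsub>A\<^esub> b \<in> N) \<longrightarrow> K \<subseteq> N)"

definition products :: "('a, 'b) ring_scheme \<Rightarrow> 'a set \<Rightarrow> nat \<Rightarrow> 'a set" where
  "products A N n = {foldr (\<otimes>\<^bsub>A\<^esub>) xs \<one>\<^bsub>A\<^esub> | xs. length xs = n \<and> set xs \<subseteq> N}"

section \<open>Prime and semiprime ideals\<close>

context ring
begin

lemma left_ideal_by_closure:
  assumes "L \<subseteq> carrier R" "\<zero> \<in> L" "\<And>a b. a \<in> L \<Longrightarrow> b \<in> L \<Longrightarrow> a \<oplus> b \<in> L"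
    and "\<And>a r. a \<in> L \<Longrightarrow> r \<in> carrier R \<Longrightarrow> r \<otimes> a \<in> L"
  shows "left_ideal R L"
proof -
  have "\<ominus> a \<in> L" if "a \<in> L" for a
    using assms(4)[OF that, of "\<ominus> \<one>"] that assms(1) by (auto simp: l_minus)
  then show ?thesis
    unfolding left_ideal_def additive_subgroup_def
    using assms by (auto intro!: add.subgroupI simp: a_inv_def[symmetric])
qed

lemma ideal_by_closure:
  assumes "L \<subseteq> carrier R" "\<zero> \<in> L" "\<And>a b. a \<in> L \<Longrightarrow> b \<in> L \<Longrightarrow> a \<oplus> b \<in> L"
    and "\<And>a r. a \<in> L \<Longrightarrow> r \<in> carrier R \<Longrightarrow> r \<otimes> a \<in> L"
    and "\<And>a r. a \<in> L \<Longrightarrow> r \<in> carrier R \<Longrightarrow> a \<otimes> r \<in> L"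
  shows "ideal L R"
  using left_ideal_by_closure[OF assms(1-4)] assms(5)
  by (intro idealI ring_axioms) (auto simp: left_ideal_def additive_subgroup_def)

lemma left_ideal_of_ideal: "ideal I R \<Longrightarrow> left_ideal R I"
  by (simp add: left_ideal_def ideal.axioms(1) ideal.I_l_closed)

lemma ideal_Inter_carrier:
  assumes "\<And>I. I \<in> F \<Longrightarrow> ideal I R"
  shows "ideal (carrier R \<inter> \<Inter>F) R"
proof (cases "F = {}")
  case True
  then show ?thesis using oneideal by simp
next
  case False
  then have "carrier R \<inter> \<Inter>F = \<Inter>F" using assms ideal.Icarr by fastforce
  then show ?thesis using i_Intersect[OF assms False] by simp
qed

lemma Spec_ideal: "P \<in> Spec R \<Longrightarrow> ideal P R"
  by (simp add: Spec_def nc_prime_def)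

lemma one_notin_Spec: "P \<in> Spec R \<Longrightarrow> \<one> \<notin> P"
  using Spec_ideal ideal.one_imp_carrier unfolding Spec_def nc_prime_def by blast

lemma SpecD:
  assumes "P \<in> Spec R" "ideal I R" "ideal J R" "\<And>a b. a \<in> I \<Longrightarrow> b \<in> J \<Longrightarrow> a \<otimes> b \<in> P"
  shows "I \<subseteq> P \<or> J \<subseteq> P"
  using assms unfolding Spec_def nc_prime_def by blast

lemma Spec_finite_Inter:
  assumes P: "P \<in> Spec R" and "finite F" and "\<And>I. I \<in> F \<Longrightarrow> ideal I R"
    and "carrier R \<inter> \<Inter>F \<subseteq> P"
  shows "\<exists>I\<in>F. I \<subseteq> P"
  using assms(2-)
proof (induction F rule: finite_induct)
  case empty
  then show ?case using one_notin_Spec[OF P] by auto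
next
  case (insert I F)
  let ?K = "carrier R \<inter> \<Inter>F"
  have I: "ideal I R" and K: "ideal ?K R" using insert.prems(1) ideal_Inter_carrier by auto
  have "I \<subseteq> P \<or> ?K \<subseteq> P"
  proof (rule SpecD[OF P I K])
    fix a b assume "a \<in> I" "b \<in> ?K"
    then have "a \<otimes> b \<in> I \<inter> ?K"
      using ideal.I_r_closed[OF I] ideal.I_l_closed[OF K] ideal.Icarr[OF I] by blast
    then show "a \<otimes> b \<in> P" using insert.prems(2) by blast
  qed
  then show ?case using insert by auto
qed

lemma ideal_Iz: "V \<subseteq> Spec R \<Longrightarrow> ideal (Iz R V) R"
  unfolding Iz_def by (rule ideal_Inter_carrier) (auto simp: Spec_ideal)

lemma Iz_antimono: "U \<subseteq> V \<Longrightarrow> Iz R V \<subseteq> Iz R U"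
  unfolding Iz_def by blast

lemma prad_Spec: "P \<in> Spec R \<Longrightarrow> prad R P = P"
  using ideal.Icarr[OF Spec_ideal] unfolding prad_def Iz_def Vz_def by blast

lemma subset_prad: "K \<subseteq> carrier R \<Longrightarrow> K \<subseteq> prad R K"
  unfolding prad_def Iz_def Vz_def by blast

lemma prad_subset_Spec: "P \<in> Spec R \<Longrightarrow> K \<subseteq> P \<Longrightarrow> prad R K \<subseteq> P"
  unfolding prad_def Iz_def Vz_def by blast

lemma zariski_closed_Vz_Spec: "P \<in> Spec R \<Longrightarrow> zariski_closed R (Vz R P)"
  unfolding zariski_closed_def using ideal.Icarr[OF Spec_ideal] by blast

lemma zariski_closed_subset_Spec: "zariski_closed R V \<Longrightarrow> V \<subseteq> Spec R"
  unfolding zariski_closed_def Vz_def by blast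

lemma zariski_closed_Vz_Iz:
  assumes "zariski_closed R V"
  shows "Vz R (Iz R V) = V"
proof -
  obtain Y where Y: "Y \<subseteq> carrier R" "V = Vz R Y" using assms unfolding zariski_closed_def by blast
  then have "Y \<subseteq> Iz R V" unfolding Iz_def Vz_def by blast
  then show ?thesis using Y(2) unfolding Vz_def Iz_def by blast
qed

lemma semiprime_ideal_Iz:
  assumes "V \<subseteq> Spec R"
  shows "semiprime_ideal R (Iz R V)"
  unfolding semiprime_ideal_def
proof (intro conjI allI impI)
  show "ideal (Iz R V) R" using ideal_Iz[OF assms] .
  fix K assume K: "ideal K R" and sq: "\<forall>a\<in>K. \<forall>b\<in>K. a \<otimes> b \<in> Iz R V"
  have "K \<subseteq> P" if "P \<in> V" for P
    using SpecD[OF _ K K, of P] sq that assms unfolding Iz_def by blast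
  then show "K \<subseteq> Iz R V" using ideal.Icarr[OF K] unfolding Iz_def by blast
qed

lemma semiprime_idealD:
  assumes "semiprime_ideal R N" "ideal K R" "\<And>a b. a \<in> K \<Longrightarrow> b \<in> K \<Longrightarrow> a \<otimes> b \<in> N"
  shows "K \<subseteq> N"
  using assms unfolding semiprime_ideal_def by blast

lemma foldr_closed: "set xs \<subseteq> carrier R \<Longrightarrow> foldr (\<otimes>) xs \<one> \<in> carrier R"
  by (induction xs) auto

lemma products_carrier: "N \<subseteq> carrier R \<Longrightarrow> products R N n \<subseteq> carrier R"
  using foldr_closed unfolding products_def by blast

lemma products_0: "products R N 0 = {\<one>}"
  by (auto simp: products_def)

lemma products_Suc: "N <#> products R N n \<subseteq> products R N (Suc n)"
proof
  fix z assume "z \<in> N <#> products R N n"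
  then obtain a xs where "z = a \<otimes> foldr (\<otimes>) xs \<one>" "a \<in> N" "length xs = n" "set xs \<subseteq> N"
    unfolding set_mult_def products_def by blast
  then show "z \<in> products R N (Suc n)"
    unfolding products_def by (intro CollectI exI[of _ "a # xs"]) simp
qed

section \<open>Annihilators modulo an ideal\<close>

lemma lann_mod_ideal:
  assumes N: "ideal N R" and I: "ideal I R"
  shows "ideal (lann_mod R N I) R"
proof (rule ideal_by_closure)
  show "lann_mod R N I \<subseteq> carrier R" by (auto simp: lann_mod_def)
  show "\<zero> \<in> lann_mod R N I"
    using ideal.Icarr[OF I] additive_subgroup.zero_closed[OF ideal.axioms(1)[OF N]]
    by (simp add: lann_mod_def)
next
  fix a b assume "a \<in> lann_mod R N I" "b \<in> lann_mod R N I"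
  then show "a \<oplus> b \<in> lann_mod R N I"
    using ideal.Icarr[OF I] additive_subgroup.a_closed[OF ideal.axioms(1)[OF N]]
    by (auto simp: lann_mod_def l_distr)
next
  fix a r assume "a \<in> lann_mod R N I" "r \<in> carrier R"
  then show "r \<otimes> a \<in> lann_mod R N I" "a \<otimes> r \<in> lann_mod R N I"
    using ideal.Icarr[OF I] ideal.I_l_closed[OF N] ideal.I_l_closed[OF I]
    by (auto simp: lann_mod_def m_assoc)
qed

lemma rann_mod_ideal:
  assumes N: "ideal N R" and I: "ideal I R"
  shows "ideal (rann_mod R N I) R"
proof (rule ideal_by_closure)
  show "rann_mod R N I \<subseteq> carrier R" by (auto simp: rann_mod_def)
  show "\<zero> \<in> rann_mod R N I"
    using ideal.Icarr[OF I] additive_subgroup.zero_closed[OF ideal.axioms(1)[OF N]]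
    by (simp add: rann_mod_def)
next
  fix a b assume "a \<in> rann_mod R N I" "b \<in> rann_mod R N I"
  then show "a \<oplus> b \<in> rann_mod R N I"
    using ideal.Icarr[OF I] additive_subgroup.a_closed[OF ideal.axioms(1)[OF N]]
    by (auto simp: rann_mod_def r_distr)
next
  fix a r assume "a \<in> rann_mod R N I" "r \<in> carrier R"
  then show "r \<otimes> a \<in> rann_mod R N I" "a \<otimes> r \<in> rann_mod R N I"
    using ideal.Icarr[OF I] ideal.I_r_closed[OF N] ideal.I_r_closed[OF I]
    by (auto simp: rann_mod_def m_assoc[symmetric])
qed

lemma lann_mod_antimono: "I \<subseteq> J \<Longrightarrow> lann_mod R N J \<subseteq> lann_mod R N I"
  unfolding lann_mod_def by blast

lemma semiprime_lann_mod_Int: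
  assumes N: "semiprime_ideal R N" and I: "ideal I R"
  shows "lann_mod R N I \<inter> I \<subseteq> N"
proof (rule semiprime_idealD[OF N])
  have "ideal N R" using N by (simp add: semiprime_ideal_def)
  then show "ideal (lann_mod R N I \<inter> I) R" using i_intersect lann_mod_ideal I by blast
qed (auto simp: lann_mod_def)

lemma semiprime_rann_mod_Int:
  assumes N: "semiprime_ideal R N" and I: "ideal I R"
  shows "rann_mod R N I \<inter> I \<subseteq> N"
proof (rule semiprime_idealD[OF N])
  have "ideal N R" using N by (simp add: semiprime_ideal_def)
  then show "ideal (rann_mod R N I \<inter> I) R" using i_intersect rann_mod_ideal I by blast
qed (auto simp: rann_mod_def)

lemma semiprime_lann_mod_eq_rann_mod:
  assumes N: "semiprime_ideal R N" and I: "ideal I R"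
  shows "lann_mod R N I = rann_mod R N I"
proof -
  have Nid: "ideal N R" using N by (simp add: semiprime_ideal_def)
  \<comment> \<open>if \<open>x I \<subseteq> N\<close>, then each \<open>i x\<close> lies in \<open>I\<close> and still annihilates \<open>I\<close> from the left\<close>
  have "i \<otimes> x \<in> N" if x: "x \<in> lann_mod R N I" and i: "i \<in> I" for x i
  proof -
    have "x \<in> carrier R" "i \<in> carrier R" using x ideal.Icarr[OF I i] by (auto simp: lann_mod_def)
    then have "i \<otimes> x \<in> lann_mod R N I \<inter> I"
      using ideal.I_l_closed[OF lann_mod_ideal[OF Nid I] x] ideal.I_r_closed[OF I i] by blast
    then show ?thesis using semiprime_lann_mod_Int[OF N I] by blast
  qed
  moreover have "x \<otimes> i \<in> N" if x: "x \<in> rann_mod R N I" and i: "i \<in> I" for x i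
  proof -
    have "x \<in> carrier R" "i \<in> carrier R" using x ideal.Icarr[OF I i] by (auto simp: rann_mod_def)
    then have "x \<otimes> i \<in> rann_mod R N I \<inter> I"
      using ideal.I_r_closed[OF rann_mod_ideal[OF Nid I] x] ideal.I_l_closed[OF I i] by blast
    then show ?thesis using semiprime_rann_mod_Int[OF N I] by blast
  qed
  ultimately show ?thesis unfolding lann_mod_def rann_mod_def by blast
qed

lemma lann_mod_Spec_of_maximal:
  assumes N: "semiprime_ideal R N" and I: "ideal I R" "\<not> I \<subseteq> N"
    and max: "\<And>J. ideal J R \<Longrightarrow> J \<subseteq> I \<Longrightarrow> \<not> J \<subseteq> N \<Longrightarrow>
      lann_mod R N I \<subseteq> lann_mod R N J \<Longrightarrow> lann_mod R N J = lann_mod R N I"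
  shows "lann_mod R N I \<in> Spec R"
  unfolding Spec_def nc_prime_def mem_Collect_eq
proof (intro conjI allI impI)
  have Nid: "ideal N R" using N by (simp add: semiprime_ideal_def)
  show "ideal (lann_mod R N I) R" using lann_mod_ideal[OF Nid I(1)] .
  show "lann_mod R N I \<noteq> carrier R"
    using I ideal.Icarr[OF I(1)] by (force simp: lann_mod_def)
  fix A B assume A: "ideal A R" and B: "ideal B R"
    and AB: "\<forall>a\<in>A. \<forall>b\<in>B. a \<otimes> b \<in> lann_mod R N I"
  show "A \<subseteq> lann_mod R N I \<or> B \<subseteq> lann_mod R N I"
  proof (rule disjCI)
    assume "\<not> B \<subseteq> lann_mod R N I"
    then obtain b i where b: "b \<in> B" and i: "i \<in> I" and bi: "b \<otimes> i \<notin> N"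
      using ideal.Icarr[OF B] by (auto simp: lann_mod_def)
    have BI: "ideal (B \<inter> I) R" using i_intersect[OF B I(1)] .
    have "b \<otimes> i \<in> B \<inter> I"
      using ideal.I_r_closed[OF B b] ideal.I_l_closed[OF I(1) i] ideal.Icarr[OF B b]
        ideal.Icarr[OF I(1) i] by blast
    then have eq: "lann_mod R N (B \<inter> I) = lann_mod R N I"
      using max[OF BI] bi lann_mod_antimono[of "B \<inter> I" I] by blast
    have "a \<otimes> y \<in> N" if a: "a \<in> A" and y: "y \<in> B \<inter> I" for a y
    proof -
      have "a \<otimes> y \<in> lann_mod R N I \<inter> I"
        using AB a y ideal.I_l_closed[OF I(1)] ideal.Icarr[OF A a] by blast
      then show ?thesis using semiprime_lann_mod_Int[OF N I(1)] by blast
    qed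
    then have "A \<subseteq> lann_mod R N (B \<inter> I)"
      using ideal.Icarr[OF A] by (auto simp: lann_mod_def)
    then show "A \<subseteq> lann_mod R N I" using eq by simp
  qed
qed

lemma Spec_rann_mod_subset:
  assumes P: "P \<in> Spec R" and I: "ideal I R" "\<not> I \<subseteq> P"
  shows "rann_mod R P I \<subseteq> P"
  using SpecD[OF P I(1) rann_mod_ideal[OF Spec_ideal[OF P] I(1)]] I(2)
  by (auto simp: rann_mod_def)

text \<open>Induction on \<open>n\<close>: the \<open>n\<close>-fold products of \<open>I\<close> lie in the right annihilator of \<open>I\<close>
  modulo \<open>P\<close>, which is contained in \<open>P\<close> unless \<open>I \<subseteq> P\<close>.\<close>
lemma Spec_products_subset:
  assumes P: "P \<in> Spec R" and I: "ideal I R"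
  shows "products R I n \<subseteq> P \<Longrightarrow> I \<subseteq> P"
proof (induction n)
  case 0
  then show ?case using one_notin_Spec[OF P] by (simp add: products_0)
next
  case (Suc n)
  show ?case
  proof (rule ccontr)
    assume "\<not> I \<subseteq> P"
    have "products R I n \<subseteq> rann_mod R P I"
    proof
      fix p assume p: "p \<in> products R I n"
      then have "x \<otimes> p \<in> P" if "x \<in> I" for x
        using that products_Suc[of I n] Suc.prems by (auto simp: set_mult_def)
      then show "p \<in> rann_mod R P I"
        using p products_carrier[of I n] ideal.Icarr[OF I] by (auto simp: rann_mod_def)
    qed
    then show False using Suc.IH Spec_rann_mod_subset[OF P I \<open>\<not> I \<subseteq> P\<close>] \<open>\<not> I \<subseteq> P\<close> by blast
  qed
qed

section \<open>Quotient rings\<close>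

lemma rcos_eq_self_iff: "ideal N R \<Longrightarrow> x \<in> carrier R \<Longrightarrow> N +> x = N \<longleftrightarrow> x \<in> N"
  using ideal.rcos_const_imp_mem a_rcos_zero by metis

lemma quot_carrier: "carrier (R Quot N) = (+>) N ` carrier R"
  unfolding FactRing_def A_RCOSETS_def' by auto

lemma quot_zero: "\<zero>\<^bsub>R Quot N\<^esub> = N"
  by (simp add: FactRing_def)

lemma quot_mult:
  "ideal N R \<Longrightarrow> x \<in> carrier R \<Longrightarrow> y \<in> carrier R \<Longrightarrow>
    (N +> x) \<otimes>\<^bsub>R Quot N\<^esub> (N +> y) = N +> (x \<otimes> y)"
  by (simp add: FactRing_def ideal.rcoset_mult_add)

lemma quot_lann_iff:
  assumes N: "ideal N R" and I: "I \<subseteq> carrier R" and x: "x \<in> carrier R"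
  shows "N +> x \<in> lann (R Quot N) ((+>) N ` I) \<longleftrightarrow> x \<in> lann_mod R N I"
proof -
  have "N +> x \<in> lann (R Quot N) ((+>) N ` I) \<longleftrightarrow> (\<forall>y\<in>I. N +> (x \<otimes> y) = N)"
    using x I by (auto simp: lann_def quot_carrier quot_zero quot_mult[OF N] subsetD)
  also have "\<dots> \<longleftrightarrow> x \<in> lann_mod R N I"
    using x I by (auto simp: lann_mod_def rcos_eq_self_iff[OF N] subsetD)
  finally show ?thesis .
qed

lemma quot_rann_iff:
  assumes N: "ideal N R" and I: "I \<subseteq> carrier R" and x: "x \<in> carrier R"
  shows "N +> x \<in> rann (R Quot N) ((+>) N ` I) \<longleftrightarrow> x \<in> rann_mod R N I"
proof -
  have "N +> x \<in> rann (R Quot N) ((+>) N ` I) \<longleftrightarrow> (\<forall>y\<in>I. N +> (y \<otimes> x) = N)"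
    using x I by (auto simp: rann_def quot_carrier quot_zero quot_mult[OF N] subsetD)
  also have "\<dots> \<longleftrightarrow> x \<in> rann_mod R N I"
    using x I by (auto simp: rann_mod_def rcos_eq_self_iff[OF N] subsetD)
  finally show ?thesis .
qed

lemma semiprime_ring_quot:
  assumes N: "semiprime_ideal R N"
  shows "semiprime_ring (R Quot N)"
  unfolding semiprime_ring_def
proof (intro allI impI)
  have Nid: "ideal N R" using N by (simp add: semiprime_ideal_def)
  fix K assume K: "ideal K (R Quot N)"
    and sq: "\<forall>a\<in>K. \<forall>b\<in>K. a \<otimes>\<^bsub>R Quot N\<^esub> b = \<zero>\<^bsub>R Quot N\<^esub>"
  have Ksub: "K \<subseteq> carrier (R Quot N)" using ideal.Icarr[OF K] by blast
  have mem: "\<And>a. a \<in> carrier R \<Longrightarrow> a \<in> \<Union>K \<longleftrightarrow> N +> a \<in> K"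
    using canonical_proj_vimage_mem_iff[OF Nid Ksub] by blast
  have Kc: "\<Union>K \<subseteq> carrier R" using canonical_proj_vimage_in_carrier[OF Nid Ksub] .
  have "\<Union>K \<subseteq> N"
  proof (rule semiprime_idealD[OF N quot_ideal_imp_ring_ideal[OF Nid K]])
    fix a b assume ab: "a \<in> \<Union>K" "b \<in> \<Union>K"
    then have a: "a \<in> carrier R" and b: "b \<in> carrier R" using Kc by auto
    have "N +> (a \<otimes> b) = (N +> a) \<otimes>\<^bsub>R Quot N\<^esub> (N +> b)"
      by (rule quot_mult[OF Nid a b, symmetric])
    also have "\<dots> = N"
      using sq mem[OF a] mem[OF b] ab unfolding quot_zero by blast
    finally show "a \<otimes> b \<in> N" using rcos_eq_self_iff[OF Nid] a b by simp
  qed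
  have "C = N" if C: "C \<in> K" for C
  proof -
    have "C \<in> (+>) N ` carrier R" using C Ksub quot_carrier by blast
    then obtain x where x: "x \<in> carrier R" "C = N +> x" by (rule imageE)
    then have "x \<in> N" using mem C \<open>\<Union>K \<subseteq> N\<close> by blast
    then show ?thesis using x rcos_eq_self_iff[OF Nid] by simp
  qed
  moreover have "N \<in> K" using additive_subgroup.zero_closed[OF ideal.axioms(1)[OF K]] quot_zero by simp
  ultimately show "K = {\<zero>\<^bsub>R Quot N\<^esub>}" unfolding quot_zero by blast
qed

lemma Vz_quot_vimage:
  assumes J: "ideal J R" and P: "\<P> \<in> Spec (R Quot J)"
  shows "\<Union>\<P> \<in> Vz R J"
proof -
  interpret Q: ring "R Quot J" using ideal.quotient_is_ring[OF J] .
  have Pid: "ideal \<P> (R Quot J)" using Q.Spec_ideal[OF P] .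
  have Psub: "\<P> \<subseteq> carrier (R Quot J)" using ideal.Icarr[OF Pid] by blast
  have mem: "\<And>a. a \<in> carrier R \<Longrightarrow> a \<in> \<Union>\<P> \<longleftrightarrow> J +> a \<in> \<P>"
    using canonical_proj_vimage_mem_iff[OF J Psub] by blast
  have "J \<in> \<P>" using additive_subgroup.zero_closed[OF ideal.axioms(1)[OF Pid]] quot_zero by simp
  then have "J \<subseteq> \<Union>\<P>" by blast
  moreover have "\<Union>\<P> \<in> Spec R"
    unfolding Spec_def nc_prime_def mem_Collect_eq
  proof (intro conjI allI impI)
    show "ideal (\<Union>\<P>) R" using quot_ideal_imp_ring_ideal[OF J Pid] .
    have "\<one>\<^bsub>R Quot J\<^esub> = J +> \<one>" by (simp add: FactRing_def)
    then show "\<Union>\<P> \<noteq> carrier R" using mem[OF one_closed] Q.one_notin_Spec[OF P] by auto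
    fix I1 I2 assume I1: "ideal I1 R" and I2: "ideal I2 R"
      and prod: "\<forall>a\<in>I1. \<forall>b\<in>I2. a \<otimes> b \<in> \<Union>\<P>"
    have "(+>) J ` I1 \<subseteq> \<P> \<or> (+>) J ` I2 \<subseteq> \<P>"
    proof (rule Q.SpecD[OF P ring_ideal_imp_quot_ideal[OF J I1] ring_ideal_imp_quot_ideal[OF J I2]])
      fix C D assume "C \<in> (+>) J ` I1" "D \<in> (+>) J ` I2"
      then obtain a b where ab: "a \<in> I1" "b \<in> I2" and CD: "C = J +> a" "D = J +> b" by blast
      have a: "a \<in> carrier R" and b: "b \<in> carrier R"
        using ideal.Icarr[OF I1 ab(1)] ideal.Icarr[OF I2 ab(2)] .
      have "J +> (a \<otimes> b) \<in> \<P>" using prod ab mem[OF m_closed[OF a b]] by blast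
      then show "C \<otimes>\<^bsub>R Quot J\<^esub> D \<in> \<P>" using quot_mult[OF J a b] CD by simp
    qed
    then show "I1 \<subseteq> \<Union>\<P> \<or> I2 \<subseteq> \<Union>\<P>"
      using mem ideal.Icarr[OF I1] ideal.Icarr[OF I2] by blast
  qed
  ultimately show ?thesis unfolding Vz_def by blast
qed

lemma ring_hom_foldr:
  assumes h: "h \<in> ring_hom R T"
  shows "set xs \<subseteq> carrier R \<Longrightarrow> h (foldr (\<otimes>) xs \<one>) = foldr (\<otimes>\<^bsub>T\<^esub>) (map h xs) \<one>\<^bsub>T\<^esub>"
proof (induction xs)
  case Nil
  then show ?case using ring_hom_one[OF h] by simp
next
  case (Cons x xs)
  then show ?case using ring_hom_mult[OF h] foldr_closed by simp
qed

section \<open>Consequences of the Goldie hypothesis\<close>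

lemma goldie_no_lann_mod_chain:
  assumes G: "goldie_hyp R" and N: "semiprime_ideal R N" and I: "\<And>n. ideal (I n) R"
  shows "\<not> (\<forall>n. lann_mod R N (I n) \<subset> lann_mod R N (I (Suc n)))"
proof
  assume chain: "\<forall>n. lann_mod R N (I n) \<subset> lann_mod R N (I (Suc n))"
  have Nid: "ideal N R" using N by (simp add: semiprime_ideal_def)
  let ?Q = "R Quot N"
  define Y where "Y n = (+>) N ` I n" for n
  have Ic: "I n \<subseteq> carrier R" for n using ideal.Icarr[OF I] by blast
  have Y: "Y n \<subseteq> carrier ?Q" for n using Ic unfolding Y_def quot_carrier by blast
  have reflect: "M \<subset> M'" if "M \<subseteq> carrier ?Q" "M' \<subseteq> carrier ?Q"
    and "{x \<in> carrier R. N +> x \<in> M} \<subset> {x \<in> carrier R. N +> x \<in> M'}" for M M'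
    using that unfolding quot_carrier by blast
  have "{x \<in> carrier R. N +> x \<in> lann ?Q (Y n)} = lann_mod R N (I n)" for n
    using quot_lann_iff[OF Nid Ic] unfolding Y_def lann_mod_def by blast
  then have "lann ?Q (Y n) \<subset> lann ?Q (Y (Suc n))" for n
    using chain reflect[of "lann ?Q (Y n)" "lann ?Q (Y (Suc n))"] unfolding lann_def by auto
  then have "\<exists>Y. \<forall>n. Y n \<subseteq> carrier ?Q \<and> lann ?Q (Y n) \<subset> lann ?Q (Y (Suc n))"
    using Y by blast
  then have "\<not> left_goldie ?Q" by (simp add: left_goldie_def)
  moreover have "{x \<in> carrier R. N +> x \<in> rann ?Q (Y n)} = lann_mod R N (I n)" for n
    using quot_rann_iff[OF Nid Ic] semiprime_lann_mod_eq_rann_mod[OF N I]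
    unfolding Y_def rann_mod_def by blast
  then have "rann ?Q (Y n) \<subset> rann ?Q (Y (Suc n))" for n
    using chain reflect[of "rann ?Q (Y n)" "rann ?Q (Y (Suc n))"] unfolding rann_def by auto
  then have "\<exists>Y. \<forall>n. Y n \<subseteq> carrier ?Q \<and> rann ?Q (Y n) \<subset> rann ?Q (Y (Suc n))"
    using Y by blast
  then have "\<not> right_goldie ?Q" by (simp add: right_goldie_def)
  ultimately show False
    using G Nid semiprime_ring_quot[OF N] unfolding goldie_hyp_def by blast
qed

lemma goldie_lann_mod_maximal:
  assumes G: "goldie_hyp R" and N: "semiprime_ideal R N"
    and F: "\<And>I. I \<in> \<F> \<Longrightarrow> ideal I R" and "I0 \<in> \<F>"
  obtains I where "I \<in> \<F>"
    "\<And>J. J \<in> \<F> \<Longrightarrow> lann_mod R N I \<subseteq> lann_mod R N J \<Longrightarrow> lann_mod R N J = lann_mod R N I"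
proof -
  define r where "r = {(J, I). I \<in> \<F> \<and> J \<in> \<F> \<and> lann_mod R N I \<subset> lann_mod R N J}"
  have "wf r"
    unfolding wf_iff_no_infinite_down_chain
  proof
    assume "\<exists>f. \<forall>i. (f (Suc i), f i) \<in> r"
    then obtain f where f: "\<And>i. (f (Suc i), f i) \<in> r" by blast
    then have "\<And>i. ideal (f i) R" using F unfolding r_def by blast
    moreover have "\<forall>i. lann_mod R N (f i) \<subset> lann_mod R N (f (Suc i))" using f unfolding r_def by blast
    ultimately show False using goldie_no_lann_mod_chain[OF G N] by blast
  qed
  then obtain I where I: "I \<in> \<F>" and min: "\<And>J. (J, I) \<in> r \<Longrightarrow> J \<notin> \<F>"
    using wfE_min \<open>I0 \<in> \<F>\<close> by metis
  show thesis
  proof (rule that[OF I])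
    fix J assume "J \<in> \<F>" "lann_mod R N I \<subseteq> lann_mod R N J"
    then show "lann_mod R N J = lann_mod R N I" using min I unfolding r_def by blast
  qed
qed

lemma goldie_Spec_lann_mod:
  assumes G: "goldie_hyp R" and N: "semiprime_ideal R N" and W: "ideal W R" "\<not> W \<subseteq> N"
  obtains I where "ideal I R" "I \<subseteq> W" "\<not> I \<subseteq> N" "lann_mod R N I \<in> Spec R"
proof -
  define \<G> where "\<G> = {I. ideal I R \<and> I \<subseteq> W \<and> \<not> I \<subseteq> N}"
  have "W \<in> \<G>" unfolding \<G>_def using W by blast
  then obtain I where "I \<in> \<G>"
    and Imax: "\<And>J. J \<in> \<G> \<Longrightarrow> lann_mod R N I \<subseteq> lann_mod R N J \<Longrightarrow> lann_mod R N J = lann_mod R N I"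
    using goldie_lann_mod_maximal[OF G N, of \<G>] unfolding \<G>_def by blast
  then have I: "ideal I R" "I \<subseteq> W" "\<not> I \<subseteq> N" unfolding \<G>_def by auto
  moreover have "lann_mod R N I \<in> Spec R"
    using lann_mod_Spec_of_maximal[OF N I(1,3)] Imax I(2) unfolding \<G>_def by blast
  ultimately show thesis by (rule that)
qed

text \<open>Goldie's argument: choose a finite intersection \<open>W\<close> of primes over \<open>N\<close> with maximal
  annihilator. If \<open>W \<not>\<subseteq> N\<close>, a prime \<open>P = lann_mod R N I\<close> with \<open>I \<subseteq> W\<close> gives
  \<open>W \<inter> P\<close> with the same annihilator, which contains \<open>I\<close>; so \<open>I \<subseteq> lann_mod R N W \<inter> W \<subseteq> N\<close>.\<close>
lemma goldie_semiprime_finite_Inter: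
  assumes G: "goldie_hyp R" and N: "semiprime_ideal R N"
  obtains F where "finite F" "F \<subseteq> Vz R N" "carrier R \<inter> \<Inter>F \<subseteq> N"
proof -
  have Nid: "ideal N R" using N by (simp add: semiprime_ideal_def)
  define \<F> where "\<F> = {carrier R \<inter> \<Inter>F | F. finite F \<and> F \<subseteq> Vz R N}"
  have \<F>_ideal: "ideal W R" if "W \<in> \<F>" for W
    using that ideal_Inter_carrier Spec_ideal unfolding \<F>_def Vz_def by blast
  have "carrier R \<inter> \<Inter>{} \<in> \<F>" unfolding \<F>_def by blast
  then obtain W where "W \<in> \<F>"
    and Wmax: "\<And>W'. W' \<in> \<F> \<Longrightarrow> lann_mod R N W \<subseteq> lann_mod R N W' \<Longrightarrow> lann_mod R N W' = lann_mod R N W"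
    using goldie_lann_mod_maximal[OF G N \<F>_ideal] by metis
  then obtain F where F: "W = carrier R \<inter> \<Inter>F" "finite F" "F \<subseteq> Vz R N" unfolding \<F>_def by blast
  have W: "ideal W R" using \<F>_ideal[OF \<open>W \<in> \<F>\<close>] .
  have "W \<subseteq> N"
  proof (rule ccontr)
    assume "\<not> W \<subseteq> N"
    then obtain I where I: "ideal I R" "I \<subseteq> W" "\<not> I \<subseteq> N" and P: "lann_mod R N I \<in> Spec R"
      using goldie_Spec_lann_mod[OF G N W] by blast
    let ?P = "lann_mod R N I"
    have "N \<subseteq> ?P"
      using ideal.I_r_closed[OF Nid] ideal.Icarr[OF Nid] ideal.Icarr[OF I(1)]
      by (auto simp: lann_mod_def)
    then have "W \<inter> ?P \<in> \<F>"
      using F P unfolding \<F>_def Vz_def by (intro CollectI exI[of _ "insert ?P F"]) auto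
    then have "lann_mod R N (W \<inter> ?P) = lann_mod R N W"
      using Wmax lann_mod_antimono[of "W \<inter> ?P" W] by blast
    moreover have "I \<subseteq> lann_mod R N (W \<inter> ?P)"
      using semiprime_lann_mod_eq_rann_mod[OF N I(1)] ideal.Icarr[OF I(1)]
      by (auto simp: lann_mod_def rann_mod_def)
    ultimately have "I \<subseteq> lann_mod R N W \<inter> W" using I(2) by blast
    then show False using semiprime_lann_mod_Int[OF N W] I(3) by blast
  qed
  then show thesis using F by (intro that) auto
qed

lemma goldie_prad_nilpotent:
  assumes G: "goldie_hyp R" and J: "ideal J R"
  obtains n where "products R (prad R J) n \<subseteq> J"
proof -
  let ?Q = "R Quot J"
  obtain n where n: "\<And>xs. length xs = n \<Longrightarrow> set xs \<subseteq> prime_radical ?Q \<Longrightarrow>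
      foldr (\<otimes>\<^bsub>?Q\<^esub>) xs \<one>\<^bsub>?Q\<^esub> = \<zero>\<^bsub>?Q\<^esub>"
    using G J unfolding goldie_hyp_def nilpotent_set_def by blast
  have prad_carrier: "prad R J \<subseteq> carrier R" unfolding prad_def Iz_def by blast
  have rad: "J +> y \<in> prime_radical ?Q" if y: "y \<in> prad R J" for y
  proof -
    have yc: "y \<in> carrier R" using y prad_carrier by blast
    have "J +> y \<in> \<P>" if P: "\<P> \<in> Spec ?Q" for \<P>
    proof -
      have "y \<in> \<Union>\<P>" using y Vz_quot_vimage[OF J P] unfolding prad_def Iz_def by blast
      moreover have "\<P> \<subseteq> carrier ?Q"
        using ideal.Icarr[OF ring.Spec_ideal[OF ideal.quotient_is_ring[OF J] P]] by blast
      ultimately show ?thesis using canonical_proj_vimage_mem_iff[OF J _ yc] by blast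
    qed
    moreover have "J +> y \<in> carrier ?Q" using yc unfolding quot_carrier by blast
    ultimately show ?thesis unfolding prime_radical_def prad_def Iz_def Vz_def by blast
  qed
  show thesis
  proof (rule that, rule subsetI)
    fix z assume "z \<in> products R (prad R J) n"
    then obtain xs where z: "z = foldr (\<otimes>) xs \<one>" and xs: "length xs = n" "set xs \<subseteq> prad R J"
      unfolding products_def by blast
    have "J +> z = foldr (\<otimes>\<^bsub>?Q\<^esub>) (map ((+>) J) xs) \<one>\<^bsub>?Q\<^esub>"
      using ring_hom_foldr[OF ideal.rcos_ring_hom[OF J]] xs(2) prad_carrier z by auto
    also have "\<dots> = J" using n[of "map ((+>) J) xs"] xs rad quot_zero by auto
    finally show "z \<in> J"
      using rcos_eq_self_iff[OF J] foldr_closed xs(2) prad_carrier z by auto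
  qed
qed

section \<open>The left ideal generated by a set and the ideal \<open>I\<^sup>S\<close>\<close>

lemma left_gen_iff:
  "g \<in> left_gen R I \<longleftrightarrow>
    (\<exists>n s x. g = (\<Oplus>k\<in>{..<n::nat}. s k \<otimes> x k) \<and> s \<in> {..<n} \<rightarrow> carrier R \<and> x \<in> {..<n} \<rightarrow> I)"
  unfolding left_gen_def by blast

lemma zero_left_gen: "\<zero> \<in> left_gen R I"
  unfolding left_gen_iff by (rule exI[of _ 0]) auto

lemma left_gen_cons:
  assumes I: "I \<subseteq> carrier R" and g: "g \<in> left_gen R I" and s: "s \<in> carrier R" and a: "a \<in> I"
  shows "s \<otimes> a \<oplus> g \<in> left_gen R I"
proof -
  obtain n :: nat and t x where g: "g = (\<Oplus>k\<in>{..<n}. t k \<otimes> x k)"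
    and t: "t \<in> {..<n} \<rightarrow> carrier R" and x: "x \<in> {..<n} \<rightarrow> I"
    using g unfolding left_gen_iff by blast
  let ?t = "t(n := s)" and ?x = "x(n := a)"
  have "(\<Oplus>k\<in>{..<Suc n}. ?t k \<otimes> ?x k) = s \<otimes> a \<oplus> (\<Oplus>k\<in>{..<n}. ?t k \<otimes> ?x k)"
    using t x s a I unfolding lessThan_Suc by (subst finsum_insert) (auto simp: Pi_def subsetD)
  also have "(\<Oplus>k\<in>{..<n}. ?t k \<otimes> ?x k) = g"
    unfolding g using t x I by (intro finsum_cong') (auto simp: Pi_def subsetD)
  finally have "s \<otimes> a \<oplus> g = (\<Oplus>k\<in>{..<Suc n}. ?t k \<otimes> ?x k)" by simp
  moreover have "?t \<in> {..<Suc n} \<rightarrow> carrier R" "?x \<in> {..<Suc n} \<rightarrow> I"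
    using t x s a by (auto simp: less_Suc_eq)
  ultimately show ?thesis unfolding left_gen_iff by blast
qed

lemma left_gen_induct [consumes 2, case_names zero cons]:
  assumes g: "g \<in> left_gen R I" and I: "I \<subseteq> carrier R"
    and zero: "P \<zero>"
    and cons: "\<And>g s a. g \<in> left_gen R I \<Longrightarrow> P g \<Longrightarrow> s \<in> carrier R \<Longrightarrow> a \<in> I \<Longrightarrow> P (s \<otimes> a \<oplus> g)"
  shows "P g"
proof -
  obtain n :: nat and t x where g: "g = (\<Oplus>k\<in>{..<n}. t k \<otimes> x k)"
    and t: "t \<in> {..<n} \<rightarrow> carrier R" and x: "x \<in> {..<n} \<rightarrow> I"
    using g unfolding left_gen_iff by blast
  have "(\<Oplus>k\<in>{..<m}. t k \<otimes> x k) \<in> left_gen R I \<and> P (\<Oplus>k\<in>{..<m}. t k \<otimes> x k)" if "m \<le> n" for m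
    using that
  proof (induction m)
    case 0
    then show ?case using zero zero_left_gen by simp
  next
    case (Suc m)
    have tx: "t m \<in> carrier R" "x m \<in> I" using t x Suc.prems by auto
    have "(\<Oplus>k\<in>{..<Suc m}. t k \<otimes> x k) = t m \<otimes> x m \<oplus> (\<Oplus>k\<in>{..<m}. t k \<otimes> x k)"
      using t x I Suc.prems unfolding lessThan_Suc by (subst finsum_insert) (auto simp: Pi_def subsetD)
    then show ?case using Suc left_gen_cons[OF I _ tx] cons[OF _ _ tx] by simp
  qed
  then show ?thesis using g by blast
qed

lemma left_gen_minimal:
  assumes L: "left_ideal R L" and IL: "I \<subseteq> L"
  shows "left_gen R I \<subseteq> L"
proof
  have Lsub: "additive_subgroup L R" and Lmult: "\<And>r x. r \<in> carrier R \<Longrightarrow> x \<in> L \<Longrightarrow> r \<otimes> x \<in> L"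
    using L unfolding left_ideal_def by auto
  have "I \<subseteq> carrier R" using IL additive_subgroup.a_subset[OF Lsub] by blast
  fix g assume "g \<in> left_gen R I"
  then show "g \<in> L"
    using \<open>I \<subseteq> carrier R\<close>
  proof (induction rule: left_gen_induct)
    case zero
    then show ?case using additive_subgroup.zero_closed[OF Lsub] .
  next
    case (cons g s a)
    then show ?case using Lmult IL additive_subgroup.a_closed[OF Lsub] by blast
  qed
qed

lemma left_gen_carrier: "I \<subseteq> carrier R \<Longrightarrow> left_gen R I \<subseteq> carrier R"
  using left_gen_minimal[OF left_ideal_of_ideal[OF oneideal]] .

lemma left_gen_base:
  assumes I: "I \<subseteq> carrier R" and a: "a \<in> I"
  shows "a \<in> left_gen R I"
proof -
  have "a \<in> carrier R" using I a by blast
  then show ?thesis using left_gen_cons[OF I zero_left_gen one_closed a] by simp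
qed

lemma left_gen_mono: "I \<subseteq> J \<Longrightarrow> left_gen R I \<subseteq> left_gen R J"
  unfolding left_gen_def by blast

lemma left_gen_add:
  assumes I: "I \<subseteq> carrier R" and g: "g \<in> left_gen R I" and h: "h \<in> left_gen R I"
  shows "g \<oplus> h \<in> left_gen R I"
  using h I
proof (induction rule: left_gen_induct)
  case zero
  then show ?case using g left_gen_carrier[OF I] by auto
next
  case (cons h s a)
  have "a \<in> carrier R" "g \<in> carrier R" "h \<in> carrier R"
    using cons.hyps I g left_gen_carrier[OF I] by auto
  then have "g \<oplus> (s \<otimes> a \<oplus> h) = s \<otimes> a \<oplus> (g \<oplus> h)"
    using cons.hyps(2) by (simp add: a_lcomm)
  then show ?case using left_gen_cons[OF I cons.IH cons.hyps(2,3)] by simp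
qed

lemma left_gen_lmult:
  assumes I: "I \<subseteq> carrier R" and g: "g \<in> left_gen R I" and r: "r \<in> carrier R"
  shows "r \<otimes> g \<in> left_gen R I"
  using g I
proof (induction rule: left_gen_induct)
  case zero
  then show ?case using r zero_left_gen by simp
next
  case (cons g s a)
  have "a \<in> carrier R" "g \<in> carrier R" using cons.hyps I left_gen_carrier[OF I] by auto
  then have "r \<otimes> (s \<otimes> a \<oplus> g) = (r \<otimes> s) \<otimes> a \<oplus> r \<otimes> g"
    using r cons.hyps(2) by (simp add: r_distr m_assoc)
  then show ?case using left_gen_cons[OF I cons.IH _ cons.hyps(3)] r cons.hyps(2) by simp
qed

lemma left_gen_mult_right:
  assumes A: "A \<subseteq> carrier R" and B: "B \<subseteq> carrier R" and g: "g \<in> left_gen R A" and b: "b \<in> B"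
  shows "g \<otimes> b \<in> left_gen R (A <#> B)"
  using g A
proof (induction rule: left_gen_induct)
  case zero
  then show ?case using b B zero_left_gen by auto
next
  case (cons g s a)
  have AB: "A <#> B \<subseteq> carrier R" using A B by (auto simp: set_mult_def)
  have "a \<in> carrier R" "g \<in> carrier R" "b \<in> carrier R"
    using cons.hyps A B b left_gen_carrier[OF A] by auto
  then have "(s \<otimes> a \<oplus> g) \<otimes> b = s \<otimes> (a \<otimes> b) \<oplus> g \<otimes> b"
    using cons.hyps(2) by (simp add: l_distr m_assoc)
  moreover have "a \<otimes> b \<in> A <#> B" using cons.hyps(3) b by (auto simp: set_mult_def)
  ultimately show ?case using left_gen_cons[OF AB cons.IH cons.hyps(2)] by simp
qed

lemma extS_iff: "x \<in> extS R I \<longleftrightarrow> x \<in> carrier R \<and> (\<forall>t\<in>carrier R. x \<otimes> t \<in> left_gen R I)"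
  unfolding extS_def by blast

lemma extS_subset_left_gen: "extS R I \<subseteq> left_gen R I"
proof
  fix x assume "x \<in> extS R I"
  then have "x \<in> carrier R" "x \<otimes> \<one> \<in> left_gen R I"
    using one_closed unfolding extS_iff by blast+
  then show "x \<in> left_gen R I" by simp
qed

lemma extS_mono: "I \<subseteq> J \<Longrightarrow> extS R I \<subseteq> extS R J"
  unfolding extS_def using left_gen_mono by blast

lemma ideal_extS:
  assumes I: "I \<subseteq> carrier R"
  shows "ideal (extS R I) R"
proof (rule ideal_by_closure)
  show "extS R I \<subseteq> carrier R" unfolding extS_def by blast
  show "\<zero> \<in> extS R I" unfolding extS_iff using zero_left_gen by simp
next
  fix a b assume "a \<in> extS R I" "b \<in> extS R I"
  then show "a \<oplus> b \<in> extS R I"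
    unfolding extS_iff using left_gen_add[OF I] by (simp add: l_distr)
next
  fix a r assume "a \<in> extS R I" "r \<in> carrier R"
  then show "r \<otimes> a \<in> extS R I" "a \<otimes> r \<in> extS R I"
    unfolding extS_iff using left_gen_lmult[OF I] by (simp_all add: m_assoc)
qed

lemma one_extS:
  assumes I: "I \<subseteq> carrier R" and "\<one> \<in> I"
  shows "\<one> \<in> extS R I"
proof -
  have "t \<otimes> \<one> \<in> left_gen R I" if "t \<in> carrier R" for t
    using left_gen_lmult[OF I left_gen_base[OF I \<open>\<one> \<in> I\<close>] that] .
  then show ?thesis unfolding extS_iff by simp
qed

lemma extS_subset_ideal:
  assumes P: "ideal P R" and IP: "I \<subseteq> P"
  shows "extS R I \<subseteq> P"
  using extS_subset_left_gen left_gen_minimal[OF left_ideal_of_ideal[OF P] IP] by blast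

lemma extS_mult_left_gen:
  assumes A: "A \<subseteq> carrier R" and B: "B \<subseteq> carrier R" and x: "x \<in> extS R A" and g: "g \<in> left_gen R B"
  shows "x \<otimes> g \<in> left_gen R (A <#> B)"
  using g B
proof (induction rule: left_gen_induct)
  case zero
  then show ?case using x zero_left_gen by (simp add: extS_iff)
next
  case (cons g s b)
  have xc: "x \<in> carrier R" and xs: "x \<otimes> s \<in> left_gen R A"
    using x cons.hyps(2) by (auto simp: extS_iff)
  have AB: "A <#> B \<subseteq> carrier R" using A B by (auto simp: set_mult_def)
  have "b \<in> carrier R" "g \<in> carrier R" using cons.hyps B left_gen_carrier[OF B] by auto
  then have "x \<otimes> (s \<otimes> b \<oplus> g) = (x \<otimes> s) \<otimes> b \<oplus> x \<otimes> g"
    using xc cons.hyps(2) by (simp add: r_distr m_assoc)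
  then show ?case
    using left_gen_add[OF AB left_gen_mult_right[OF A B xs cons.hyps(3)] cons.IH] by simp
qed

lemma extS_mult:
  assumes A: "A \<subseteq> carrier R" and B: "B \<subseteq> carrier R" and x: "x \<in> extS R A" and y: "y \<in> extS R B"
  shows "x \<otimes> y \<in> extS R (A <#> B)"
  unfolding extS_iff
proof (intro conjI ballI)
  have xc: "x \<in> carrier R" and yc: "y \<in> carrier R" using x y by (auto simp: extS_iff)
  then show "x \<otimes> y \<in> carrier R" by simp
  fix t assume t: "t \<in> carrier R"
  then have "x \<otimes> (y \<otimes> t) \<in> left_gen R (A <#> B)"
    using y extS_mult_left_gen[OF A B x] by (simp add: extS_iff)
  then show "x \<otimes> y \<otimes> t \<in> left_gen R (A <#> B)" using xc yc t by (simp add: m_assoc)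
qed

lemma foldr_extS:
  assumes N: "N \<subseteq> carrier R"
  shows "set xs \<subseteq> extS R N \<Longrightarrow> foldr (\<otimes>) xs \<one> \<in> extS R (products R N (length xs))"
proof (induction xs)
  case Nil
  then show ?case using one_extS[of "products R N 0"] by (simp add: products_0)
next
  case (Cons x xs)
  then have "x \<otimes> foldr (\<otimes>) xs \<one> \<in> extS R (N <#> products R N (length xs))"
    using extS_mult[OF N products_carrier[OF N]] by simp
  then show ?case using extS_mono[OF products_Suc] by auto
qed

lemma extS_subset_Spec_of_nilpotent:
  assumes P: "P \<in> Spec R" and N: "N \<subseteq> carrier R" and nil: "products R N n \<subseteq> P"
  shows "extS R N \<subseteq> P"
proof (rule Spec_products_subset[OF P ideal_extS[OF N]])
  show "products R (extS R N) n \<subseteq> P"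
    using foldr_extS[OF N] extS_subset_ideal[OF Spec_ideal[OF P] nil]
    unfolding products_def by blast
qed

lemma extS_Spec_mult:
  assumes P: "P \<in> Spec R" and A: "A \<subseteq> carrier R" and B: "B \<subseteq> carrier R"
    and AB: "extS R (A <#> B) \<subseteq> P"
  shows "extS R A \<subseteq> P \<or> extS R B \<subseteq> P"
  using SpecD[OF P ideal_extS[OF A] ideal_extS[OF B]] extS_mult[OF A B] AB by blast

end

section \<open>Subrings\<close>

locale ring_subring = ring S for S (structure) +
  fixes R :: "'a set"
  assumes subring: "subring R S"
begin

sublocale sub: ring "S\<lparr>carrier := R\<rparr>"
  using subring_is_ring[OF subring] .

lemma subring_carrier: "R \<subseteq> carrier S"
  using subringE(1)[OF subring] .

lemma ideal_Int_subring:
  assumes P: "ideal P S"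
  shows "ideal (P \<inter> R) (S\<lparr>carrier := R\<rparr>)"
proof (rule sub.ideal_by_closure)
  show "\<zero>\<^bsub>S\<lparr>carrier := R\<rparr>\<^esub> \<in> P \<inter> R"
    using subringE(2)[OF subring] additive_subgroup.zero_closed[OF ideal.axioms(1)[OF P]] by simp
next
  fix a b assume "a \<in> P \<inter> R" "b \<in> P \<inter> R"
  then show "a \<oplus>\<^bsub>S\<lparr>carrier := R\<rparr>\<^esub> b \<in> P \<inter> R"
    using subringE(7)[OF subring] additive_subgroup.a_closed[OF ideal.axioms(1)[OF P]] by simp
next
  fix a r assume "a \<in> P \<inter> R" "r \<in> carrier (S\<lparr>carrier := R\<rparr>)"
  then show "r \<otimes>\<^bsub>S\<lparr>carrier := R\<rparr>\<^esub> a \<in> P \<inter> R" "a \<otimes>\<^bsub>S\<lparr>carrier := R\<rparr>\<^esub> r \<in> P \<inter> R"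
    using subringE(6)[OF subring] ideal.I_l_closed[OF P] ideal.I_r_closed[OF P] subring_carrier
    by auto
qed simp

lemma extS_finite_Inter_Spec:
  assumes P: "P \<in> Spec S"
  shows "finite F \<Longrightarrow> (\<And>Q. Q \<in> F \<Longrightarrow> ideal Q (S\<lparr>carrier := R\<rparr>)) \<Longrightarrow>
    extS S (R \<inter> \<Inter>F) \<subseteq> P \<Longrightarrow> \<exists>Q\<in>F. extS S Q \<subseteq> P"
proof (induction F rule: finite_induct)
  case empty
  then show ?case
    using one_extS[OF subring_carrier subringE(3)[OF subring]] one_notin_Spec[OF P] by auto
next
  case (insert Q F)
  let ?K = "R \<inter> \<Inter>F"
  have Q: "ideal Q (S\<lparr>carrier := R\<rparr>)" and K: "ideal ?K (S\<lparr>carrier := R\<rparr>)"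
    using insert.prems(1) sub.ideal_Inter_carrier[of F] by auto
  have QR: "Q \<subseteq> R" using ideal.Icarr[OF Q] by auto
  have "Q <#> ?K \<subseteq> Q \<inter> ?K"
    using ideal.I_r_closed[OF Q] ideal.I_l_closed[OF K] QR by (auto simp: set_mult_def)
  also have "\<dots> = R \<inter> \<Inter>(insert Q F)" using QR by blast
  finally have "extS S (Q <#> ?K) \<subseteq> P" using insert.prems(2) by (rule extS_mono[THEN subset_trans])
  then have "extS S Q \<subseteq> P \<or> extS S ?K \<subseteq> P"
    using extS_Spec_mult[OF P] QR subring_carrier by blast
  then show ?case using insert by blast
qed

lemma extS_prad_subset_Spec:
  assumes G: "goldie_hyp (S\<lparr>carrier := R\<rparr>)" and P: "P \<in> Spec S"
  shows "extS S (prad (S\<lparr>carrier := R\<rparr>) (P \<inter> R)) \<subseteq> P"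
proof -
  obtain n where "products (S\<lparr>carrier := R\<rparr>) (prad (S\<lparr>carrier := R\<rparr>) (P \<inter> R)) n \<subseteq> P \<inter> R"
    using sub.goldie_prad_nilpotent[OF G ideal_Int_subring[OF Spec_ideal[OF P]]] .
  then have "products S (prad (S\<lparr>carrier := R\<rparr>) (P \<inter> R)) n \<subseteq> P"
    by (auto simp: products_def)
  moreover have "prad (S\<lparr>carrier := R\<rparr>) (P \<inter> R) \<subseteq> carrier S"
    using subring_carrier unfolding prad_def Iz_def by auto
  ultimately show ?thesis using extS_subset_Spec_of_nilpotent[OF P] by blast
qed

lemma Vz_subset_rho_Vz:
  assumes Q: "Q \<in> Spec (S\<lparr>carrier := R\<rparr>)" and QP: "extS S Q \<subseteq> P"
  shows "Vz S P \<subseteq> rho S R (Vz (S\<lparr>carrier := R\<rparr>) Q)"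
  using sub.prad_Spec[OF Q] QP unfolding rho_def prad_def Vz_def by auto

lemma subset_prad_of_lam_Vz_subset:
  assumes P: "P \<in> Spec S" and Q: "Q \<in> Spec (S\<lparr>carrier := R\<rparr>)"
    and lam: "lam S R (Vz S P) \<subseteq> Vz (S\<lparr>carrier := R\<rparr>) Q"
  shows "Q \<subseteq> prad (S\<lparr>carrier := R\<rparr>) (P \<inter> R)"
proof -
  have "Vz (S\<lparr>carrier := R\<rparr>) (P \<inter> R) \<subseteq> Vz (S\<lparr>carrier := R\<rparr>) Q"
    using lam prad_Spec[OF P] unfolding lam_def prad_def by simp
  then have "prad (S\<lparr>carrier := R\<rparr>) Q \<subseteq> prad (S\<lparr>carrier := R\<rparr>) (P \<inter> R)"
    unfolding prad_def by (rule sub.Iz_antimono)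
  then show ?thesis using sub.prad_Spec[OF Q] by simp
qed

lemma lam_subset_imp_subset_rho:
  assumes G: "goldie_hyp (S\<lparr>carrier := R\<rparr>)" and U: "U \<subseteq> Spec S" and lam: "lam S R U \<subseteq> V"
  shows "U \<subseteq> rho S R V"
proof
  fix P assume "P \<in> U"
  then have P: "P \<in> Spec S" and "Iz S U \<subseteq> P" using U unfolding Iz_def by auto
  then have "Vz (S\<lparr>carrier := R\<rparr>) (P \<inter> R) \<subseteq> V" using lam unfolding lam_def Vz_def by blast
  then have "Iz (S\<lparr>carrier := R\<rparr>) V \<subseteq> prad (S\<lparr>carrier := R\<rparr>) (P \<inter> R)"
    unfolding prad_def by (rule sub.Iz_antimono)
  then have "extS S (Iz (S\<lparr>carrier := R\<rparr>) V) \<subseteq> P"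
    using extS_prad_subset_Spec[OF G P] by (rule extS_mono[THEN subset_trans])
  then show "P \<in> rho S R V" using P unfolding rho_def Vz_def by blast
qed

lemma goldie_Spec_contraction_subset:
  assumes GS: "goldie_hyp S" and E: "E \<subseteq> carrier S" and U: "U \<subseteq> Vz S E"
    and Q': "Q' \<in> Spec (S\<lparr>carrier := R\<rparr>)" and UQ': "Iz S U \<inter> R \<subseteq> Q'"
  obtains P where "P \<in> Spec S" "E \<subseteq> P" "P \<inter> R \<subseteq> Q'"
proof -
  have "semiprime_ideal S (prad S E)"
    unfolding prad_def by (rule semiprime_ideal_Iz) (auto simp: Vz_def)
  then obtain F where F: "finite F" "F \<subseteq> Vz S (prad S E)" "carrier S \<inter> \<Inter>F \<subseteq> prad S E"
    using goldie_semiprime_finite_Inter[OF GS] by blast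
  have "prad S E \<subseteq> Iz S U"
    using U unfolding prad_def by (rule Iz_antimono)
  have "R \<inter> \<Inter>((\<lambda>P. P \<inter> R) ` F) \<subseteq> Q'"
  proof
    fix x assume x: "x \<in> R \<inter> \<Inter>((\<lambda>P. P \<inter> R) ` F)"
    then have "x \<in> carrier S \<inter> \<Inter>F" using subring_carrier by blast
    then have "x \<in> Iz S U" using F(3) \<open>prad S E \<subseteq> Iz S U\<close> by blast
    then show "x \<in> Q'" using x UQ' by blast
  qed
  moreover have "ideal I (S\<lparr>carrier := R\<rparr>)" if "I \<in> (\<lambda>P. P \<inter> R) ` F" for I
    using that F(2) ideal_Int_subring[OF Spec_ideal] unfolding Vz_def by blast
  ultimately obtain P where P: "P \<in> F" and PQ': "P \<inter> R \<subseteq> Q'"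
    using sub.Spec_finite_Inter[OF Q', of "(\<lambda>P. P \<inter> R) ` F"] F(1) by auto
  have "P \<in> Spec S" and "prad S E \<subseteq> P" using P F(2) unfolding Vz_def by auto
  moreover have "E \<subseteq> prad S E" using subset_prad[OF E] .
  ultimately show thesis using that PQ' by blast
qed

lemma goldie_extS_Iz_subset_Spec:
  assumes GR: "goldie_hyp (S\<lparr>carrier := R\<rparr>)" and V: "zariski_closed (S\<lparr>carrier := R\<rparr>) V"
    and P: "P \<in> Spec S" and IP: "extS S (Iz (S\<lparr>carrier := R\<rparr>) V) \<subseteq> P"
  obtains Q where "Q \<in> Spec (S\<lparr>carrier := R\<rparr>)" "Iz (S\<lparr>carrier := R\<rparr>) V \<subseteq> Q" "extS S Q \<subseteq> P"
proof -
  let ?I = "Iz (S\<lparr>carrier := R\<rparr>) V"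
  have "semiprime_ideal (S\<lparr>carrier := R\<rparr>) ?I"
    using sub.semiprime_ideal_Iz sub.zariski_closed_subset_Spec[OF V] by blast
  then obtain F where F: "finite F" "F \<subseteq> Vz (S\<lparr>carrier := R\<rparr>) ?I" "R \<inter> \<Inter>F \<subseteq> ?I"
    using sub.goldie_semiprime_finite_Inter[OF GR] by auto
  have "extS S (R \<inter> \<Inter>F) \<subseteq> P" using F(3) IP by (rule extS_mono[THEN subset_trans])
  then obtain Q where "Q \<in> F" "extS S Q \<subseteq> P"
    using extS_finite_Inter_Spec[OF P F(1)] F(2) sub.Spec_ideal unfolding Vz_def by blast
  then show thesis using that F(2) unfolding Vz_def by blast
qed

lemma subset_rho_imp_lam_subset:
  assumes GR: "goldie_hyp (S\<lparr>carrier := R\<rparr>)" and GS: "goldie_hyp S"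
    and cond: "\<forall>P \<in> Spec S. \<forall>Q \<in> Spec (S\<lparr>carrier := R\<rparr>).
      extS S Q \<subseteq> P \<longrightarrow> Q \<subseteq> prad (S\<lparr>carrier := R\<rparr>) (P \<inter> R)"
    and V: "zariski_closed (S\<lparr>carrier := R\<rparr>) V" and rho: "U \<subseteq> rho S R V"
  shows "lam S R U \<subseteq> V"
proof
  fix Q' assume "Q' \<in> lam S R U"
  then have Q': "Q' \<in> Spec (S\<lparr>carrier := R\<rparr>)" and UQ': "Iz S U \<inter> R \<subseteq> Q'"
    unfolding lam_def Vz_def by auto
  let ?I = "Iz (S\<lparr>carrier := R\<rparr>) V"
  have "extS S ?I \<subseteq> carrier S" by (auto simp: extS_def)
  then obtain P where P: "P \<in> Spec S" "extS S ?I \<subseteq> P" "P \<inter> R \<subseteq> Q'"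
    using goldie_Spec_contraction_subset[OF GS _ _ Q' UQ'] rho unfolding rho_def by blast
  then obtain Q where Q: "Q \<in> Spec (S\<lparr>carrier := R\<rparr>)" "?I \<subseteq> Q" "extS S Q \<subseteq> P"
    using goldie_extS_Iz_subset_Spec[OF GR V] by blast
  have "?I \<subseteq> prad (S\<lparr>carrier := R\<rparr>) (P \<inter> R)" using cond P(1) Q by blast
  also have "\<dots> \<subseteq> Q'" using sub.prad_subset_Spec[OF Q' P(3)] .
  finally show "Q' \<in> V" using Q' sub.zariski_closed_Vz_Iz[OF V] unfolding Vz_def by blast
qed

end

theorem lemma3p13:
  fixes S :: "('a, 'b) ring_scheme" and R :: "'a set"
  assumes "ring S" and "subring R S"
    and "goldie_hyp (S\<lparr>carrier := R\<rparr>)" and "goldie_hyp S"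
  shows "(\<forall>U V. zariski_closed S U \<longrightarrow> zariski_closed (S\<lparr>carrier := R\<rparr>) V \<longrightarrow>
            (lam S R U \<subseteq> V \<longleftrightarrow> U \<subseteq> rho S R V))
     \<longleftrightarrow> (\<forall>P \<in> Spec S. \<forall>Q \<in> Spec (S\<lparr>carrier := R\<rparr>).
            extS S Q \<subseteq> P \<longrightarrow> Q \<subseteq> prad (S\<lparr>carrier := R\<rparr>) (P \<inter> R))"
proof -
  interpret ring_subring S R
    using assms(1,2) by (simp add: ring_subring_def ring_subring_axioms_def)
  show ?thesis
  proof (intro iffI ballI impI allI)
    assume adj: "\<forall>U V. zariski_closed S U \<longrightarrow> zariski_closed (S\<lparr>carrier := R\<rparr>) V \<longrightarrow>
      (lam S R U \<subseteq> V \<longleftrightarrow> U \<subseteq> rho S R V)"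
    fix P Q assume P: "P \<in> Spec S" and Q: "Q \<in> Spec (S\<lparr>carrier := R\<rparr>)" and "extS S Q \<subseteq> P"
    then have "lam S R (Vz S P) \<subseteq> Vz (S\<lparr>carrier := R\<rparr>) Q"
      using zariski_closed_Vz_Spec[OF P] sub.zariski_closed_Vz_Spec[OF Q] Vz_subset_rho_Vz
      by (simp add: adj)
    then show "Q \<subseteq> prad (S\<lparr>carrier := R\<rparr>) (P \<inter> R)" by (rule subset_prad_of_lam_Vz_subset[OF P Q])
  next
    fix U V assume U: "zariski_closed S U" and V: "zariski_closed (S\<lparr>carrier := R\<rparr>) V"
    show "lam S R U \<subseteq> V \<Longrightarrow> U \<subseteq> rho S R V"
      using lam_subset_imp_subset_rho[OF assms(3) zariski_closed_subset_Spec[OF U]] .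
    assume "\<forall>P \<in> Spec S. \<forall>Q \<in> Spec (S\<lparr>carrier := R\<rparr>).
      extS S Q \<subseteq> P \<longrightarrow> Q \<subseteq> prad (S\<lparr>carrier := R\<rparr>) (P \<inter> R)"
    then show "U \<subseteq> rho S R V \<Longrightarrow> lam S R U \<subseteq> V"
      using subset_rho_imp_lam_subset[OF assms(3,4) _ V] by blast
  qed
qed

end
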